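(* For a unitary boundary triple $\{\mathcal H,\Gamma_0,\Gamma_1\}$ for $A^*$ with $A_*=\operatorname{dom}\Gamma$, the following are equivalent: (i) $\Gamma_0:A_*\to\mathcal H$ is bounded (with respect to the norm of $\mathfrak H^2$) and $\operatorname{ran}\Gamma_0=\mathcal H$; (ii) $\Gamma_1:A_*\to\mathcal H$ is bounded and $\operatorname{ran}\Gamma_1=\mathcal H$; (iii) $\{\mathcal H,\Gamma_0,\Gamma_1\}$ is an ordinary boundary triple for $A^*$. *)

theory Defs
  imports "HOL-Analysis.Analysis"
begin

text \<open>HOL-Analysis only provides real inner product spaces, so we introduce
complex Hilbert spaces as a type class: a real Banach space carrying a complex
scalar multiplication compatible with the real one and a sesquilinear
(linear in the first, antilinear in the second argument), Hermitian inner
product inducing the norm.\<close>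

class complex_hilbert = real_normed_vector + complete_space +
  fixes cscale :: "complex \<Rightarrow> 'a \<Rightarrow> 'a"
    and cinner :: "'a \<Rightarrow> 'a \<Rightarrow> complex"
  assumes cscale_add_right: "cscale a (x + y) = cscale a x + cscale a y"
    and cscale_add_left: "cscale (a + b) x = cscale a x + cscale b x"
    and cscale_cscale: "cscale a (cscale b x) = cscale (a * b) x"
    and cscale_of_real: "cscale (complex_of_real r) x = r *\<^sub>R x"
    and cinner_add_left: "cinner (x + y) z = cinner x z + cinner y z"
    and cinner_cscale_left: "cinner (cscale a x) y = a * cinner x y"
    and cinner_commute: "cinner y x = cnj (cinner x y)"
    and cinner_norm: "cinner x x = complex_of_real ((norm x)\<^sup>2)"

text \<open>Elements of \<open>\<frak>h\<^sup>2 = \<frak>h \<oplus> \<frak>h\<close> are pairs \<open>(f, f')\<close>; the norm of the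
product type is \<open>sqrt (\<parallel>f\<parallel>\<^sup>2 + \<parallel>f'\<parallel>\<^sup>2)\<close>, the norm of \<open>\<frak>h\<^sup>2\<close>.\<close>

definition clinear_subspace :: "'a::complex_hilbert set \<Rightarrow> bool" where
  "clinear_subspace S \<longleftrightarrow> 0 \<in> S \<and> (\<forall>x\<in>S. \<forall>y\<in>S. x + y \<in> S)
      \<and> (\<forall>a. \<forall>x\<in>S. cscale a x \<in> S)"

instantiation prod :: (complex_hilbert, complex_hilbert) complex_hilbert
begin
definition cscale_prod_def: "cscale a x = (cscale a (fst x), cscale a (snd x))"
definition cinner_prod_def: "cinner x y = cinner (fst x) (fst y) + cinner (snd x) (snd y)"
instance
proof
  fix a b :: complex and x y z :: "'a \<times> 'b" and r :: real
  show "cscale a (x + y) = cscale a x + cscale a y"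
    by (simp add: cscale_prod_def cscale_add_right)
  show "cscale (a + b) x = cscale a x + cscale b x"
    by (simp add: cscale_prod_def cscale_add_left)
  show "cscale a (cscale b x) = cscale (a * b) x"
    by (simp add: cscale_prod_def cscale_cscale)
  show "cscale (complex_of_real r) x = r *\<^sub>R x"
    by (simp add: cscale_prod_def cscale_of_real scaleR_prod_def)
  show "cinner (x + y) z = cinner x z + cinner y z"
    by (simp add: cinner_prod_def cinner_add_left)
  show "cinner (cscale a x) y = a * cinner x y"
    by (simp add: cinner_prod_def cscale_prod_def cinner_cscale_left distrib_left)
  show "cinner y x = cnj (cinner x y)"
    by (simp add: cinner_prod_def cinner_commute[of "fst x"] cinner_commute[of "snd x"])
  show "cinner x x = complex_of_real ((norm x)\<^sup>2)"
    by (simp add: cinner_prod_def cinner_norm norm_prod_def)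
qed
end

definition clinear_on :: "'a::complex_hilbert set \<Rightarrow> ('a \<Rightarrow> 'b::complex_hilbert) \<Rightarrow> bool" where
  "clinear_on S T \<longleftrightarrow> (\<forall>x\<in>S. \<forall>y\<in>S. T (x + y) = T x + T y)
      \<and> (\<forall>a. \<forall>x\<in>S. T (cscale a x) = cscale a (T x))"

definition adjoint_rel :: "('h::complex_hilbert \<times> 'h) set \<Rightarrow> ('h \<times> 'h) set" where
  "adjoint_rel A = {(g, g'). \<forall>(f, f') \<in> A. cinner f' g = cinner f g'}"

definition closed_symmetric_rel :: "('h::complex_hilbert \<times> 'h) set \<Rightarrow> bool" where
  "closed_symmetric_rel A \<longleftrightarrow> clinear_subspace A \<and> closed A \<and> A \<subseteq> adjoint_rel A"

text \<open>The Krein-space form on \<open>\<frak>h\<^sup>2\<close> (up to the factor \<open>i\<close>):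
  \<open>(f',g)\<^sub>\<frak>h - (f,g')\<^sub>\<frak>h\<close>.\<close>

definition green :: "('h::complex_hilbert \<times> 'h) \<Rightarrow> ('h \<times> 'h) \<Rightarrow> complex" where
  "green fh gh = cinner (snd fh) (fst gh) - cinner (fst fh) (snd gh)"

text \<open>A unitary boundary triple \<open>{\<H>, \<Gamma>\<^sub>0, \<Gamma>\<^sub>1}\<close> for \<open>A\<^sup>*\<close>: the operator
\<open>\<Gamma> = (\<Gamma>\<^sub>0, \<Gamma>\<^sub>1) : \<frak>h\<^sup>2 \<supseteq> A\<^sub>* \<rightarrow> \<H>\<^sup>2\<close>, \<open>A\<^sub>* = dom \<Gamma>\<close>, is a boundary relation
for \<open>A\<^sup>*\<close> (Derkach-Hassi-Malamud-de Snoo): (A1) \<open>dom \<Gamma>\<close> is dense in \<open>A\<^sup>*\<close> and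
Green's identity holds on it; (A2) maximality: every \<open>(g\<^sup>^, k\<^sup>^) \<in> \<frak>h\<^sup>2 \<times> \<H>\<^sup>2\<close>
satisfying Green's identity against all of \<open>\<Gamma>\<close> belongs to \<open>\<Gamma>\<close>
(equivalently, \<open>\<Gamma>\<close> is unitary between the Krein spaces \<open>(\<frak>h\<^sup>2,J\<^sub>\<frak>h)\<close>,
\<open>(\<H>\<^sup>2,J\<^sub>\<H>)\<close> with \<open>ker \<Gamma> = A\<close>).\<close>

definition unitary_boundary_triple ::
  "('h::complex_hilbert \<times> 'h) set \<Rightarrow> ('h \<times> 'h) set
     \<Rightarrow> ('h \<times> 'h \<Rightarrow> 'k::complex_hilbert) \<Rightarrow> ('h \<times> 'h \<Rightarrow> 'k) \<Rightarrow> bool" where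
  "unitary_boundary_triple A Astar \<Gamma>0 \<Gamma>1 \<longleftrightarrow>
     closed_symmetric_rel A \<and>
     clinear_subspace Astar \<and> Astar \<subseteq> adjoint_rel A \<and> closure Astar = adjoint_rel A \<and>
     clinear_on Astar \<Gamma>0 \<and> clinear_on Astar \<Gamma>1 \<and>
     (\<forall>fh\<in>Astar. \<forall>gh\<in>Astar.
        green fh gh = cinner (\<Gamma>1 fh) (\<Gamma>0 gh) - cinner (\<Gamma>0 fh) (\<Gamma>1 gh)) \<and>
     (\<forall>gh k0 k1. (\<forall>fh\<in>Astar. green fh gh = cinner (\<Gamma>1 fh) k0 - cinner (\<Gamma>0 fh) k1)
        \<longrightarrow> gh \<in> Astar \<and> \<Gamma>0 gh = k0 \<and> \<Gamma>1 gh = k1)"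

definition ordinary_boundary_triple ::
  "('h::complex_hilbert \<times> 'h) set \<Rightarrow> ('h \<times> 'h) set
     \<Rightarrow> ('h \<times> 'h \<Rightarrow> 'k::complex_hilbert) \<Rightarrow> ('h \<times> 'h \<Rightarrow> 'k) \<Rightarrow> bool" where
  "ordinary_boundary_triple A Astar \<Gamma>0 \<Gamma>1 \<longleftrightarrow>
     closed_symmetric_rel A \<and> Astar = adjoint_rel A \<and>
     clinear_on Astar \<Gamma>0 \<and> clinear_on Astar \<Gamma>1 \<and>
     (\<forall>fh\<in>Astar. \<forall>gh\<in>Astar.
        green fh gh = cinner (\<Gamma>1 fh) (\<Gamma>0 gh) - cinner (\<Gamma>0 fh) (\<Gamma>1 gh)) \<and>
     (\<lambda>fh. (\<Gamma>0 fh, \<Gamma>1 fh)) ` Astar = UNIV"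

definition bounded_on :: "'a::real_normed_vector set \<Rightarrow> ('a \<Rightarrow> 'b::real_normed_vector) \<Rightarrow> bool" where
  "bounded_on S T \<longleftrightarrow> (\<exists>C. \<forall>x\<in>S. norm (T x) \<le> C * norm x)"

end

theory Submission
  imports Defs
begin

text \<open>If \<open>\<Gamma>\<^sub>0\<close> is bounded and onto, then for \<open>g \<in> A\<^sub>*\<close> and any \<open>k\<^sub>1\<close> the Riesz representation
of \<open>f \<mapsto> (\<Gamma>\<^sub>0 f, \<Gamma>\<^sub>1 g - k\<^sub>1)\<close> through Green's form yields a correction \<open>h\<close> such that
\<open>g + h\<close> satisfies Green's identity with boundary values \<open>(\<Gamma>\<^sub>0 g, k\<^sub>1)\<close>; maximality of the
unitary triple puts \<open>g + h\<close> into \<open>A\<^sub>*\<close>, so \<open>\<Gamma> = (\<Gamma>\<^sub>0, \<Gamma>\<^sub>1)\<close> maps \<open>A\<^sub>*\<close> onto \<open>\<H>\<^sup>2\<close>.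
Conversely, if \<open>\<Gamma>\<close> is onto, Green's identity against an element with boundary values
\<open>(0, -k)\<close> shows that every functional \<open>f \<mapsto> (\<Gamma>\<^sub>0 f, k)\<close> is bounded, so \<open>\<Gamma>\<^sub>0\<close> is bounded by
the uniform boundedness principle; with both \<open>\<Gamma>\<^sub>0\<close> and \<open>\<Gamma>\<^sub>1\<close> bounded, Green's identity passes
to limits and maximality makes \<open>A\<^sub>*\<close> closed, i.e. \<open>A\<^sub>* = A\<^sup>*\<close>. The rotation
\<open>(\<Gamma>\<^sub>0, \<Gamma>\<^sub>1) \<mapsto> (\<Gamma>\<^sub>1, -\<Gamma>\<^sub>0)\<close> preserves unitary boundary triples and transfers
everything from \<open>\<Gamma>\<^sub>0\<close> to \<open>\<Gamma>\<^sub>1\<close>.\<close>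

lemma cscale_minus_right: "cscale a (- x) = - cscale a x"
proof -
  have "cscale a 0 = 0"
    using cscale_add_right[of a 0 0] by simp
  then have "cscale a x + cscale a (- x) = 0"
    using cscale_add_right[of a x "- x"] by (metis add.right_inverse)
  then show ?thesis
    by (simp only: add_eq_0_iff)
qed

lemma cinner_zero_left [simp]: "cinner 0 y = 0"
  using cinner_add_left[of 0 0 y] by simp

lemma cinner_minus_left [simp]: "cinner (- x) y = - cinner x y"
  using cinner_add_left[of x "- x" y] by (simp add: add_eq_0_iff)

lemma cinner_diff_left: "cinner (x - y) z = cinner x z - cinner y z"
  using cinner_add_left[of x "- y" z] by simp

lemma cinner_add_right: "cinner x (y + z) = cinner x y + cinner x z"
  by (metis cinner_add_left cinner_commute complex_cnj_add)

lemma cinner_zero_right [simp]: "cinner x 0 = 0"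
  using cinner_commute[of x 0] by simp

lemma cinner_minus_right [simp]: "cinner x (- y) = - cinner x y"
  by (metis cinner_commute cinner_minus_left complex_cnj_minus)

lemma cinner_diff_right: "cinner x (y - z) = cinner x y - cinner x z"
  by (metis cinner_commute cinner_diff_left complex_cnj_diff)

lemma cinner_cscale_right: "cinner x (cscale a y) = cnj a * cinner x y"
  by (metis cinner_commute cinner_cscale_left complex_cnj_mult complex_cnj_cnj)

lemma cinner_scaleR_left: "cinner (r *\<^sub>R x) y = of_real r * cinner x y"
  by (metis cinner_cscale_left cscale_of_real)

lemma cinner_scaleR_right: "cinner x (r *\<^sub>R y) = of_real r * cinner x y"
  by (metis cinner_cscale_right cscale_of_real complex_cnj_complex_of_real)

lemma Re_cinner_self: "Re (cinner x x) = (norm x)\<^sup>2"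
  by (simp add: cinner_norm)

lemma norm_add_square_cinner:
  "(norm (x + y))\<^sup>2 = (norm x)\<^sup>2 + (norm y)\<^sup>2 + 2 * Re (cinner x y)"
proof -
  have "cinner (x + y) (x + y) = cinner x x + cinner y y + (cinner x y + cnj (cinner x y))"
    by (simp add: cinner_add_left cinner_add_right cinner_commute[of y x])
  then show ?thesis
    by (simp flip: Re_cinner_self)
qed

lemma norm_cinner_le: "cmod (cinner x y) \<le> norm x * norm y"
proof (cases "y = 0")
  case False
  define c where "c = cinner x y"
  define n where "n = (norm y)\<^sup>2"
  have n: "n > 0" using False by (simp add: n_def)
  define t where "t = c / of_real n"
  let ?z = "x - cscale t y"
  have "cinner ?z ?z = cinner x x - cnj t * c - t * cnj c + t * cnj t * cinner y y"
    by (simp add: cinner_diff_left cinner_diff_right cinner_cscale_left cinner_cscale_right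
        cinner_commute[of y x] c_def algebra_simps)
  also have "\<dots> = cinner x x - of_real ((cmod c)\<^sup>2 / n)"
    using n by (simp add: t_def n_def cinner_norm field_simps flip: complex_norm_square)
  finally have "cinner ?z ?z = cinner x x - of_real ((cmod c)\<^sup>2 / n)" .
  then have "0 \<le> (norm x)\<^sup>2 - (cmod c)\<^sup>2 / n"
    by (metis Re_cinner_self minus_complex.sel Re_complex_of_real zero_le_power2)
  then have "(cmod c)\<^sup>2 \<le> (norm x * norm y)\<^sup>2"
    using n by (simp add: field_simps power_mult_distrib n_def)
  then show ?thesis
    unfolding c_def by (meson mult_nonneg_nonneg norm_ge_zero power2_le_imp_le)
qed simp

lemma bounded_linear_cinner_left: "bounded_linear (\<lambda>x. cinner x y)"
  by (rule bounded_linear_intro[where K = "norm y"])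
    (simp_all add: cinner_add_left cinner_scaleR_left scaleR_conv_of_real norm_cinner_le)

lemma bounded_linear_cinner_right: "bounded_linear (\<lambda>y. cinner x y)"
  by (rule bounded_linear_intro[where K = "norm x"])
    (simp_all add: cinner_add_right cinner_scaleR_right scaleR_conv_of_real
      norm_cinner_le[of x, THEN order_trans] mult.commute)

lemma subspace_if_clinear_subspace: "clinear_subspace S \<Longrightarrow> subspace S"
  unfolding clinear_subspace_def subspace_def by (metis cscale_of_real)

lemma clinear_on_scaleR: "clinear_on S T \<Longrightarrow> x \<in> S \<Longrightarrow> T (r *\<^sub>R x) = r *\<^sub>R T x"
  unfolding clinear_on_def by (metis cscale_of_real)

lemma clinear_on_diff:
  assumes "clinear_subspace S" "clinear_on S T" "x \<in> S" "y \<in> S"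
  shows "T (x - y) = T x - T y"
proof -
  have "(- 1) *\<^sub>R y \<in> S"
    using subspace_scale[OF subspace_if_clinear_subspace[OF assms(1)] assms(4)] .
  then have "T (x + (- 1) *\<^sub>R y) = T x + T ((- 1) *\<^sub>R y)"
    using assms(2,3) unfolding clinear_on_def by blast
  then show ?thesis
    using clinear_on_scaleR[OF assms(2,4), of "- 1"] by simp
qed

lemma clinear_on_uminus: "clinear_on S T \<Longrightarrow> clinear_on S (\<lambda>x. - T x)"
  unfolding clinear_on_def by (simp add: cscale_minus_right)

lemma uniformly_continuous_on_if_bounded_on:
  assumes "clinear_subspace S" "clinear_on S T" "bounded_on S T"
  shows "uniformly_continuous_on S T"
proof -
  obtain C where C: "\<And>x. x \<in> S \<Longrightarrow> norm (T x) \<le> C * norm x"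
    using \<open>bounded_on S T\<close> unfolding bounded_on_def by blast
  have "dist (T x) (T y) \<le> max C 0 * dist x y" if "x \<in> S" "y \<in> S" for x y
  proof -
    have "x - y \<in> S"
      using subspace_diff[OF subspace_if_clinear_subspace[OF assms(1)] that] .
    then have "norm (T (x - y)) \<le> max C 0 * norm (x - y)"
      using C[of "x - y"] mult_right_mono[of C "max C 0" "norm (x - y)"] by simp
    then show ?thesis
      using clinear_on_diff[OF assms(1,2) that] by (simp add: dist_norm)
  qed
  then have "(max C 0)-lipschitz_on S T"
    by (intro lipschitz_onI) auto
  then show ?thesis
    by (rule lipschitz_on_uniformly_continuous)
qed

section \<open>Riesz representation on a subspace\<close>

lemma quadratic_nonneg_imp_linear_coeff_zero:
  fixes a b :: real
  assumes "b \<ge> 0" and nonneg: "\<And>t. 2 * t * a + t\<^sup>2 * b \<ge> 0"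
  shows "a = 0"
proof (rule ccontr)
  assume "a \<noteq> 0"
  define t where "t = - a / (b + 1)"
  have "(b + 1) * t = - a"
    using \<open>b \<ge> 0\<close> by (simp add: t_def)
  then have "(b + 1)\<^sup>2 * (2 * t * a + t\<^sup>2 * b) = - (a\<^sup>2 * (b + 2))"
    by algebra
  moreover have "a\<^sup>2 * (b + 2) > 0"
    using \<open>a \<noteq> 0\<close> \<open>b \<ge> 0\<close> by simp
  moreover have "(b + 1)\<^sup>2 * (2 * t * a + t\<^sup>2 * b) \<ge> 0"
    using nonneg[of t] by simp
  ultimately show False by linarith
qed

lemma Cauchy_if_dist_square_le:
  fixes x :: "nat \<Rightarrow> 'a::metric_space"
  assumes dist_le: "\<And>m n. (dist (x m) (x n))\<^sup>2 \<le> e m + e n" and "e \<longlonglongrightarrow> 0"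
  shows "Cauchy x"
proof (rule metric_CauchyI)
  fix \<epsilon> :: real
  assume "\<epsilon> > 0"
  then obtain M where M: "\<And>n. n \<ge> M \<Longrightarrow> \<bar>e n\<bar> < \<epsilon>\<^sup>2 / 2"
    using LIMSEQ_D[OF \<open>e \<longlonglongrightarrow> 0\<close>, of "\<epsilon>\<^sup>2 / 2"] by auto
  have "dist (x m) (x n) < \<epsilon>" if "m \<ge> M" "n \<ge> M" for m n
  proof -
    have "(dist (x m) (x n))\<^sup>2 < \<epsilon>\<^sup>2"
      using dist_le[of m n] M[OF \<open>m \<ge> M\<close>] M[OF \<open>n \<ge> M\<close>] by linarith
    then show ?thesis
      using \<open>\<epsilon> > 0\<close> by (simp add: power_less_imp_less_base)
  qed
  then show "\<exists>M. \<forall>m\<ge>M. \<forall>n\<ge>M. dist (x m) (x n) < \<epsilon>" by blast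
qed

lemma Re_cinner_eq_if_minimizing_limit:
  fixes S :: "'a::complex_hilbert set" and \<psi> :: "'a \<Rightarrow> real"
  assumes "subspace S"
    and add: "\<And>x y. x \<in> S \<Longrightarrow> y \<in> S \<Longrightarrow> \<psi> (x + y) = \<psi> x + \<psi> y"
    and scale: "\<And>r x. x \<in> S \<Longrightarrow> \<psi> (r *\<^sub>R x) = r * \<psi> x"
    and min: "\<And>z. z \<in> S \<Longrightarrow> d \<le> (norm z)\<^sup>2 - 2 * \<psi> z"
    and x: "\<And>n. x n \<in> S" "x \<longlonglongrightarrow> w" "(\<lambda>n. (norm (x n))\<^sup>2 - 2 * \<psi> (x n)) \<longlonglongrightarrow> d"
    and "y \<in> S"
  shows "\<psi> y = Re (cinner y w)"
proof -
  have "0 \<le> 2 * t * (Re (cinner w y) - \<psi> y) + t\<^sup>2 * (norm y)\<^sup>2" for t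
  proof -
    have "(norm (x n + t *\<^sub>R y))\<^sup>2 - 2 * \<psi> (x n + t *\<^sub>R y)
        = (norm (x n))\<^sup>2 - 2 * \<psi> (x n) + 2 * t * (Re (cinner (x n) y) - \<psi> y) + t\<^sup>2 * (norm y)\<^sup>2"
      for n
      using x(1) \<open>y \<in> S\<close> \<open>subspace S\<close>
      by (simp add: norm_add_square_cinner add scale subspace_scale cinner_scaleR_right
          power_mult_distrib algebra_simps)
    then have "d \<le> (norm (x n))\<^sup>2 - 2 * \<psi> (x n) + 2 * t * (Re (cinner (x n) y) - \<psi> y)
        + t\<^sup>2 * (norm y)\<^sup>2" for n
      by (metis min x(1) \<open>y \<in> S\<close> \<open>subspace S\<close> subspace_add subspace_scale)
    moreover have "(\<lambda>n. (norm (x n))\<^sup>2 - 2 * \<psi> (x n) + 2 * t * (Re (cinner (x n) y) - \<psi> y)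
        + t\<^sup>2 * (norm y)\<^sup>2) \<longlonglongrightarrow> d + 2 * t * (Re (cinner w y) - \<psi> y) + t\<^sup>2 * (norm y)\<^sup>2"
      by (intro tendsto_intros x tendsto_Re bounded_linear.tendsto[OF bounded_linear_cinner_left])
    ultimately have "d \<le> d + 2 * t * (Re (cinner w y) - \<psi> y) + t\<^sup>2 * (norm y)\<^sup>2"
      using LIMSEQ_le_const by blast
    then show ?thesis by simp
  qed
  then have "Re (cinner w y) - \<psi> y = 0"
    by (intro quadratic_nonneg_imp_linear_coeff_zero[of "(norm y)\<^sup>2"]) auto
  then show ?thesis
    using cinner_commute[of y w] by simp
qed

lemma Cauchy_minimizing_sequence:
  fixes S :: "'a::complex_hilbert set" and \<psi> :: "'a \<Rightarrow> real"
  assumes "subspace S"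
    and add: "\<And>x y. x \<in> S \<Longrightarrow> y \<in> S \<Longrightarrow> \<psi> (x + y) = \<psi> x + \<psi> y"
    and scale: "\<And>r x. x \<in> S \<Longrightarrow> \<psi> (r *\<^sub>R x) = r * \<psi> x"
    and min: "\<And>z. z \<in> S \<Longrightarrow> d \<le> (norm z)\<^sup>2 - 2 * \<psi> z"
    and x: "\<And>n. x n \<in> S" "\<And>n. (norm (x n))\<^sup>2 - 2 * \<psi> (x n) < d + inverse (real (Suc n))"
  shows "Cauchy x"
proof (rule Cauchy_if_dist_square_le)
  define F where "F z = (norm z)\<^sup>2 - 2 * \<psi> z" for z
  show "(dist (x m) (x n))\<^sup>2 \<le> 2 * inverse (real (Suc m)) + 2 * inverse (real (Suc n))" for m n
  proof -
    \<comment> \<open>the parallelogram law, with the midpoint \<open>z\<close> of \<open>x m\<close> and \<open>x n\<close> as competitor\<close>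
    define z where "z = (1/2) *\<^sub>R (x m + x n)"
    have "\<psi> z = (\<psi> (x m) + \<psi> (x n)) / 2"
      using x(1)[of m] x(1)[of n] \<open>subspace S\<close> by (simp only: z_def add scale subspace_add)
    moreover have "(norm z)\<^sup>2 = (norm (x m + x n))\<^sup>2 / 4"
      by (simp add: z_def power_divide)
    moreover have "(norm (x m - x n))\<^sup>2 = (norm (x m))\<^sup>2 + (norm (x n))\<^sup>2 - 2 * Re (cinner (x m) (x n))"
      using norm_add_square_cinner[of "x m" "- x n"] by simp
    ultimately have "(norm (x m - x n))\<^sup>2 = 2 * (F (x m) + F (x n) - 2 * F z)"
      using norm_add_square_cinner[of "x m" "x n"] unfolding F_def by algebra
    moreover have "z \<in> S"
      using x(1) \<open>subspace S\<close> by (simp add: z_def subspace_add subspace_scale)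
    then have "d \<le> F z"
      unfolding F_def by (rule min)
    ultimately show ?thesis
      using x(2)[of m] x(2)[of n] by (simp add: F_def dist_norm)
  qed
  show "(\<lambda>n. 2 * inverse (real (Suc n))) \<longlonglongrightarrow> 0"
    using tendsto_mult_right_zero[OF LIMSEQ_inverse_real_of_nat] by simp
qed

lemma real_riesz_representation_subspace:
  fixes S :: "'a::complex_hilbert set" and \<psi> :: "'a \<Rightarrow> real"
  assumes "subspace S"
    and add: "\<And>x y. x \<in> S \<Longrightarrow> y \<in> S \<Longrightarrow> \<psi> (x + y) = \<psi> x + \<psi> y"
    and scale: "\<And>r x. x \<in> S \<Longrightarrow> \<psi> (r *\<^sub>R x) = r * \<psi> x"
    and bound: "\<And>x. x \<in> S \<Longrightarrow> \<psi> x \<le> C * norm x"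
  shows "\<exists>w. \<forall>y\<in>S. \<psi> y = Re (cinner y w)"
proof -
  define F where "F z = (norm z)\<^sup>2 - 2 * \<psi> z" for z
  define d where "d = Inf (F ` S)"
  have "F z \<ge> - C\<^sup>2" if "z \<in> S" for z
    using bound[OF that] sum_power2_ge_zero[of "norm z - C" 0]
    by (simp add: F_def power2_eq_square algebra_simps)
  then have "bdd_below (F ` S)"
    by (meson bdd_belowI2)
  then have d_le: "d \<le> F z" if "z \<in> S" for z
    unfolding d_def using that by (simp add: cInf_lower)
  have "\<exists>z\<in>S. F z < d + inverse (real (Suc n))" for n
    using cInf_lessD[of "F ` S" "d + inverse (real (Suc n))"] subspace_0[OF \<open>subspace S\<close>]
    by (auto simp: d_def)
  then obtain x where x: "\<And>n. x n \<in> S" "\<And>n. F (x n) < d + inverse (real (Suc n))"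
    by metis
  have "Cauchy x"
    using \<open>subspace S\<close> add scale d_le x unfolding F_def by (rule Cauchy_minimizing_sequence)
  then obtain w where "x \<longlonglongrightarrow> w"
    using Cauchy_convergent_iff convergent_def by blast
  have Fx: "(\<lambda>n. F (x n)) \<longlonglongrightarrow> d"
  proof (rule tendsto_sandwich[of "\<lambda>n. d" _ _ "\<lambda>n. d + inverse (real (Suc n))"])
    show "(\<lambda>n. d + inverse (real (Suc n))) \<longlonglongrightarrow> d"
      using tendsto_add[OF tendsto_const LIMSEQ_inverse_real_of_nat, of d] by simp
    show "\<forall>\<^sub>F n in sequentially. F (x n) \<le> d + inverse (real (Suc n))"
      using x(2) by (intro always_eventually allI less_imp_le)
  qed (use d_le x(1) in auto)
  have "\<psi> y = Re (cinner y w)" if "y \<in> S" for y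
    using \<open>subspace S\<close> add scale d_le x(1) \<open>x \<longlonglongrightarrow> w\<close> Fx that unfolding F_def
    by (rule Re_cinner_eq_if_minimizing_limit)
  then show ?thesis by blast
qed

lemma riesz_representation_subspace:
  fixes S :: "'a::complex_hilbert set" and \<phi> :: "'a \<Rightarrow> complex"
  assumes "clinear_subspace S"
    and add: "\<And>x y. x \<in> S \<Longrightarrow> y \<in> S \<Longrightarrow> \<phi> (x + y) = \<phi> x + \<phi> y"
    and scale: "\<And>a x. x \<in> S \<Longrightarrow> \<phi> (cscale a x) = a * \<phi> x"
    and bound: "\<And>x. x \<in> S \<Longrightarrow> cmod (\<phi> x) \<le> C * norm x"
  shows "\<exists>w. \<forall>y\<in>S. \<phi> y = cinner y w"
proof -
  have "\<exists>w. \<forall>y\<in>S. Re (\<phi> y) = Re (cinner y w)"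
  proof (rule real_riesz_representation_subspace[where C = C])
    show "subspace S"
      using \<open>clinear_subspace S\<close> by (rule subspace_if_clinear_subspace)
    show "Re (\<phi> (r *\<^sub>R x)) = r * Re (\<phi> x)" if "x \<in> S" for r x
      using scale[OF that, of "of_real r"] by (simp add: cscale_of_real)
    show "Re (\<phi> x) \<le> C * norm x" if "x \<in> S" for x
      using bound[OF that] complex_Re_le_cmod order_trans by blast
  qed (simp add: add)
  then obtain w where w: "\<forall>y\<in>S. Re (\<phi> y) = Re (cinner y w)" ..
  \<comment> \<open>the imaginary part is read off at \<open>cscale \<i> y\<close>\<close>
  have "\<phi> y = cinner y w" if "y \<in> S" for y
  proof (rule complex_eqI)
    show "Re (\<phi> y) = Re (cinner y w)"
      using w that by blast
    have "cscale \<i> y \<in> S"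
      using \<open>clinear_subspace S\<close> that by (simp add: clinear_subspace_def)
    then have "Re (\<phi> (cscale \<i> y)) = Re (cinner (cscale \<i> y) w)"
      using w by blast
    then show "Im (\<phi> y) = Im (cinner y w)"
      using that by (simp add: scale cinner_cscale_left)
  qed
  then show ?thesis by blast
qed

section \<open>Uniform boundedness\<close>

lemma uniform_boundedness_cinner:
  fixes V :: "'a::complex_hilbert set"
  assumes weakly_bounded: "\<And>k. \<exists>C. \<forall>v\<in>V. cmod (cinner v k) \<le> C"
  shows "\<exists>B. \<forall>v\<in>V. norm v \<le> B"
proof -
  define E where "E n = {k. \<forall>v\<in>V. cmod (cinner v k) \<le> real n}" for n
  have "closed (E n)" for n
  proof -
    have "E n = (\<Inter>v\<in>V. {k. cmod (cinner v k) \<le> real n})"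
      by (auto simp: E_def)
    moreover have "continuous_on UNIV (cinner v)" for v :: 'a
      by (simp add: linear_continuous_on bounded_linear_cinner_right)
    ultimately show ?thesis
      by (auto intro!: closed_Collect_le continuous_intros)
  qed
  moreover have "\<Union> (range E) = UNIV"
  proof -
    have "k \<in> \<Union> (range E)" for k
    proof -
      obtain C where "\<forall>v\<in>V. cmod (cinner v k) \<le> C"
        using weakly_bounded by blast
      moreover obtain n :: nat where "C \<le> real n"
        using real_arch_simple by blast
      ultimately have "k \<in> E n"
        by (force simp: E_def)
      then show ?thesis by blast
    qed
    then show ?thesis by blast
  qed
  ultimately have "\<exists>n. interior (E n) \<noteq> {}"
    using Met_TC.metric_Baire_category_alt[of "range E"] by (auto simp: complete_UNIV)
  then obtain n k0 r where r: "r > 0" "ball k0 r \<subseteq> E n"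
    by (meson all_not_in_conv interior_subset open_contains_ball open_interior subset_trans)
  have "norm v \<le> 4 * real n / r" if "v \<in> V" for v
  proof (cases "v = 0")
    case False
    define u where "u = (r / (2 * norm v)) *\<^sub>R v"
    have "k0 \<in> E n" "k0 + u \<in> E n"
      using r False by (auto simp: u_def dist_norm intro!: subsetD[OF r(2)])
    then have "cmod (cinner v (k0 + u)) \<le> real n" "cmod (cinner v k0) \<le> real n"
      using \<open>v \<in> V\<close> by (auto simp: E_def)
    moreover have "cinner v u = of_real (r * norm v / 2)"
      using False by (simp add: u_def cinner_scaleR_right cinner_norm power2_eq_square)
    then have "cmod (cinner v u) = \<bar>r * norm v / 2\<bar>"
      by (simp only: norm_of_real)
    then have "cmod (cinner v u) = r * norm v / 2"
      using r by simp
    ultimately have "r * norm v / 2 \<le> 2 * real n"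
      using norm_triangle_ineq4[of "cinner v (k0 + u)" "cinner v k0"]
      by (simp add: cinner_add_right)
    then show ?thesis
      using r by (simp add: field_simps)
  qed (use r in simp)
  then show ?thesis by blast
qed

lemma bounded_on_if_weakly_bounded:
  assumes "clinear_subspace S" "clinear_on S T"
    and weakly_bounded: "\<And>k. \<exists>C. \<forall>x\<in>S. cmod (cinner (T x) k) \<le> C * norm x"
  shows "bounded_on S T"
proof -
  define V where "V = T ` {x \<in> S. norm x \<le> 1}"
  have "\<exists>C. \<forall>v\<in>V. cmod (cinner v k) \<le> C" for k
  proof -
    obtain C where C: "\<And>x. x \<in> S \<Longrightarrow> cmod (cinner (T x) k) \<le> C * norm x"
      using weakly_bounded by blast
    have "cmod (cinner v k) \<le> \<bar>C\<bar>" if "v \<in> V" for v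
    proof -
      obtain x where x: "v = T x" "x \<in> S" "norm x \<le> 1"
        using \<open>v \<in> V\<close> unfolding V_def by blast
      have "cmod (cinner v k) \<le> C * norm x"
        using C x by blast
      also have "\<dots> \<le> \<bar>C\<bar> * norm x"
        by (simp add: mult_right_mono)
      also have "\<dots> \<le> \<bar>C\<bar>"
        using x(3) by (simp add: mult_left_le)
      finally show ?thesis .
    qed
    then show ?thesis by blast
  qed
  then have "\<exists>B. \<forall>v\<in>V. norm v \<le> B"
    by (rule uniform_boundedness_cinner)
  then obtain B where B: "\<And>v. v \<in> V \<Longrightarrow> norm v \<le> B"
    by blast
  have "norm (T x) \<le> B * norm x" if "x \<in> S" for x
  proof (cases "x = 0")
    case True
    then show ?thesis
      using clinear_on_scaleR[OF assms(2) that, of 0] by simp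
  next
    case False
    have "inverse (norm x) *\<^sub>R x \<in> S"
      using subspace_scale[OF subspace_if_clinear_subspace[OF assms(1)] that] .
    then have "T (inverse (norm x) *\<^sub>R x) \<in> V"
      unfolding V_def using False by (intro imageI) simp
    then have "norm (T (inverse (norm x) *\<^sub>R x)) \<le> B"
      by (rule B)
    then have "inverse (norm x) * norm (T x) \<le> B"
      by (simp add: clinear_on_scaleR[OF assms(2) that])
    then show ?thesis
      using False by (simp add: field_simps)
  qed
  then show ?thesis
    unfolding bounded_on_def by blast
qed

section \<open>Green's form and boundary triples\<close>

lemma green_eq_cinner: "green fh gh = cinner fh (- snd gh, fst gh)"
  by (simp add: green_def cinner_prod_def)

lemma norm_green_le: "cmod (green fh gh) \<le> norm fh * norm gh"
proof -
  have "norm (- snd gh, fst gh) = norm gh"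
    by (simp add: norm_prod_def add.commute)
  then show ?thesis
    using norm_cinner_le[of fh "(- snd gh, fst gh)"] by (simp add: green_eq_cinner)
qed

lemma green_add_right: "green fh (gh + kh) = green fh gh + green fh kh"
  by (simp add: green_def cinner_add_right)

lemma green_representation:
  fixes T :: "'h::complex_hilbert \<times> 'h \<Rightarrow> 'k::complex_hilbert"
  assumes "clinear_subspace S" "clinear_on S T" "bounded_on S T"
  shows "\<exists>gh. \<forall>fh\<in>S. green fh gh = cinner (T fh) m"
proof -
  obtain C where C: "\<And>x. x \<in> S \<Longrightarrow> norm (T x) \<le> C * norm x"
    using \<open>bounded_on S T\<close> unfolding bounded_on_def by blast
  have "\<exists>w. \<forall>x\<in>S. cinner (T x) m = cinner x w"
  proof (rule riesz_representation_subspace[OF \<open>clinear_subspace S\<close>, where C = "C * norm m"])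
    show "cinner (T (x + y)) m = cinner (T x) m + cinner (T y) m" if "x \<in> S" "y \<in> S" for x y
      using assms(2) that unfolding clinear_on_def by (simp add: cinner_add_left)
    show "cinner (T (cscale a x)) m = a * cinner (T x) m" if "x \<in> S" for a x
      using assms(2) that unfolding clinear_on_def by (simp add: cinner_cscale_left)
    show "cmod (cinner (T x) m) \<le> C * norm m * norm x" if "x \<in> S" for x
      using norm_cinner_le[of "T x" m] mult_right_mono[OF C[OF that], of "norm m"]
      by (simp add: algebra_simps)
  qed
  then obtain w where "\<forall>x\<in>S. cinner (T x) m = cinner x w" ..
  then have "\<forall>fh\<in>S. green fh (snd w, - fst w) = cinner (T fh) m"
    by (simp add: green_eq_cinner)
  then show ?thesis ..
qed

lemma boundary_map_rotate_surj_iff: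
  fixes \<Gamma>0 \<Gamma>1 :: "'a \<Rightarrow> 'b::ab_group_add"
  shows "(\<lambda>x. (\<Gamma>1 x, - \<Gamma>0 x)) ` S = UNIV \<longleftrightarrow> (\<lambda>x. (\<Gamma>0 x, \<Gamma>1 x)) ` S = UNIV"
proof
  assume surj: "(\<lambda>x. (\<Gamma>1 x, - \<Gamma>0 x)) ` S = UNIV"
  have "(a, b) \<in> (\<lambda>x. (\<Gamma>0 x, \<Gamma>1 x)) ` S" for a b
  proof -
    have "(b, - a) \<in> (\<lambda>x. (\<Gamma>1 x, - \<Gamma>0 x)) ` S"
      using surj by simp
    then obtain x where "x \<in> S" "a = \<Gamma>0 x" "b = \<Gamma>1 x"
      by auto
    then show ?thesis by auto
  qed
  then show "(\<lambda>x. (\<Gamma>0 x, \<Gamma>1 x)) ` S = UNIV" by auto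
next
  assume surj: "(\<lambda>x. (\<Gamma>0 x, \<Gamma>1 x)) ` S = UNIV"
  have "(a, b) \<in> (\<lambda>x. (\<Gamma>1 x, - \<Gamma>0 x)) ` S" for a b
  proof -
    have "(- b, a) \<in> (\<lambda>x. (\<Gamma>0 x, \<Gamma>1 x)) ` S"
      using surj by simp
    then obtain x where "x \<in> S" "- b = \<Gamma>0 x" "a = \<Gamma>1 x"
      by auto
    then have "(a, b) = (\<Gamma>1 x, - \<Gamma>0 x)"
      by (auto simp: minus_equation_iff[of b])
    then show ?thesis
      using \<open>x \<in> S\<close> by (rule image_eqI)
  qed
  then show "(\<lambda>x. (\<Gamma>1 x, - \<Gamma>0 x)) ` S = UNIV" by auto
qed

context
  fixes A Astar :: "('h::complex_hilbert \<times> 'h) set"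
    and \<Gamma>0 \<Gamma>1 :: "'h \<times> 'h \<Rightarrow> 'k::complex_hilbert"
  assumes ubt: "unitary_boundary_triple A Astar \<Gamma>0 \<Gamma>1"
begin

lemma ubt_closed_symmetric: "closed_symmetric_rel A"
  and ubt_dom_subset: "Astar \<subseteq> adjoint_rel A"
  and ubt_closure: "closure Astar = adjoint_rel A"
  and ubt_subspace: "clinear_subspace Astar"
  using ubt unfolding unitary_boundary_triple_def by blast+

lemma ubt_linear: "clinear_on Astar \<Gamma>0" "clinear_on Astar \<Gamma>1"
  using ubt unfolding unitary_boundary_triple_def by blast+

lemma ubt_green:
  "fh \<in> Astar \<Longrightarrow> gh \<in> Astar \<Longrightarrow>
    green fh gh = cinner (\<Gamma>1 fh) (\<Gamma>0 gh) - cinner (\<Gamma>0 fh) (\<Gamma>1 gh)"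
  using ubt unfolding unitary_boundary_triple_def by (elim conjE) blast

lemma ubt_maximal:
  assumes "\<And>fh. fh \<in> Astar \<Longrightarrow> green fh gh = cinner (\<Gamma>1 fh) k0 - cinner (\<Gamma>0 fh) k1"
  shows "gh \<in> Astar" "\<Gamma>0 gh = k0" "\<Gamma>1 gh = k1"
proof -
  have "\<forall>gh k0 k1. (\<forall>fh\<in>Astar. green fh gh = cinner (\<Gamma>1 fh) k0 - cinner (\<Gamma>0 fh) k1)
      \<longrightarrow> gh \<in> Astar \<and> \<Gamma>0 gh = k0 \<and> \<Gamma>1 gh = k1"
    using ubt unfolding unitary_boundary_triple_def by (elim conjE)
  then show "gh \<in> Astar" "\<Gamma>0 gh = k0" "\<Gamma>1 gh = k1"
    using assms by blast+
qed

lemma bounded_on_Gamma0_if_boundary_map_surj: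
  assumes "(\<lambda>fh. (\<Gamma>0 fh, \<Gamma>1 fh)) ` Astar = UNIV"
  shows "bounded_on Astar \<Gamma>0"
proof (rule bounded_on_if_weakly_bounded[OF ubt_subspace ubt_linear(1)])
  fix k
  have "(0, - k) \<in> (\<lambda>fh. (\<Gamma>0 fh, \<Gamma>1 fh)) ` Astar"
    using assms by simp
  then obtain gh where gh: "gh \<in> Astar" "\<Gamma>0 gh = 0" "\<Gamma>1 gh = - k"
    by auto
  \<comment> \<open>by Green's identity, \<open>(\<Gamma>\<^sub>0 fh, k)\<close> is Green's form of \<open>fh\<close> against \<open>gh\<close>\<close>
  have "cmod (cinner (\<Gamma>0 fh) k) \<le> norm gh * norm fh" if "fh \<in> Astar" for fh
    using ubt_green[OF that gh(1)] norm_green_le[of fh gh] gh by (simp add: mult.commute)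
  then show "\<exists>C. \<forall>fh\<in>Astar. cmod (cinner (\<Gamma>0 fh) k) \<le> C * norm fh"
    by blast
qed

lemma adjoint_rel_eq_if_bounded_on:
  assumes "bounded_on Astar \<Gamma>0" "bounded_on Astar \<Gamma>1"
  shows "Astar = adjoint_rel A"
proof -
  have "gh \<in> Astar" if "gh \<in> closure Astar" for gh
  proof -
    have "\<exists>f. (\<forall>n. f n \<in> Astar) \<and> f \<longlonglongrightarrow> gh"
      using that by (simp only: closure_sequential)
    then obtain f where f: "\<And>n. f n \<in> Astar" "f \<longlonglongrightarrow> gh"
      by blast
    have "Cauchy (\<lambda>n. \<Gamma>0 (f n))"
      using uniformly_continuous_on_if_bounded_on[OF ubt_subspace ubt_linear(1) assms(1)]
        LIMSEQ_imp_Cauchy[OF f(2)] f(1) by (rule uniformly_continuous_on_Cauchy)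
    then obtain k0 where k0: "(\<lambda>n. \<Gamma>0 (f n)) \<longlonglongrightarrow> k0"
      unfolding Cauchy_convergent_iff convergent_def ..
    have "Cauchy (\<lambda>n. \<Gamma>1 (f n))"
      using uniformly_continuous_on_if_bounded_on[OF ubt_subspace ubt_linear(2) assms(2)]
        LIMSEQ_imp_Cauchy[OF f(2)] f(1) by (rule uniformly_continuous_on_Cauchy)
    then obtain k1 where k1: "(\<lambda>n. \<Gamma>1 (f n)) \<longlonglongrightarrow> k1"
      unfolding Cauchy_convergent_iff convergent_def ..
    have "green fh gh = cinner (\<Gamma>1 fh) k0 - cinner (\<Gamma>0 fh) k1" if "fh \<in> Astar" for fh
    proof (rule LIMSEQ_unique)
      show "(\<lambda>n. green fh (f n)) \<longlonglongrightarrow> green fh gh"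
        unfolding green_def
        by (intro tendsto_intros bounded_linear.tendsto[OF bounded_linear_cinner_right] f(2))
      show "(\<lambda>n. green fh (f n)) \<longlonglongrightarrow> cinner (\<Gamma>1 fh) k0 - cinner (\<Gamma>0 fh) k1"
        unfolding ubt_green[OF that f(1)]
        by (intro tendsto_intros bounded_linear.tendsto[OF bounded_linear_cinner_right] k0 k1)
    qed
    then show ?thesis
      by (rule ubt_maximal(1))
  qed
  then have "closure Astar = Astar"
    using closure_subset by blast
  then show ?thesis
    using ubt_closure by simp
qed

lemma boundary_map_surj_if_bounded_on_Gamma0:
  assumes "bounded_on Astar \<Gamma>0" "\<Gamma>0 ` Astar = UNIV"
  shows "(\<lambda>fh. (\<Gamma>0 fh, \<Gamma>1 fh)) ` Astar = UNIV"
proof -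
  have "(k0, k1) \<in> (\<lambda>fh. (\<Gamma>0 fh, \<Gamma>1 fh)) ` Astar" for k0 k1
  proof -
    have "k0 \<in> \<Gamma>0 ` Astar"
      using assms(2) by simp
    then obtain g where g: "g \<in> Astar" "\<Gamma>0 g = k0"
      by auto
    obtain h where h: "\<forall>fh\<in>Astar. green fh h = cinner (\<Gamma>0 fh) (\<Gamma>1 g - k1)"
      using green_representation[OF ubt_subspace ubt_linear(1) assms(1)] by blast
    \<comment> \<open>adding \<open>h\<close> moves the \<open>\<Gamma>\<^sub>1\<close>-value of \<open>g\<close> to \<open>k1\<close> and keeps its \<open>\<Gamma>\<^sub>0\<close>-value\<close>
    have "green fh (g + h) = cinner (\<Gamma>1 fh) k0 - cinner (\<Gamma>0 fh) k1" if "fh \<in> Astar" for fh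
      using ubt_green[OF that g(1)] h that g(2) by (simp add: green_add_right cinner_diff_right)
    note g_plus_h = ubt_maximal[OF this]
    show ?thesis
      using g_plus_h(2,3) by (intro image_eqI[where f = "\<lambda>fh. (\<Gamma>0 fh, \<Gamma>1 fh)", OF _ g_plus_h(1)]) simp
  qed
  then show ?thesis by auto
qed

lemma bounded_on_surj_Gamma0_iff_boundary_map_surj:
  "bounded_on Astar \<Gamma>0 \<and> \<Gamma>0 ` Astar = UNIV \<longleftrightarrow> (\<lambda>fh. (\<Gamma>0 fh, \<Gamma>1 fh)) ` Astar = UNIV"
proof
  assume surj: "(\<lambda>fh. (\<Gamma>0 fh, \<Gamma>1 fh)) ` Astar = UNIV"
  have "\<Gamma>0 ` Astar = fst ` (\<lambda>fh. (\<Gamma>0 fh, \<Gamma>1 fh)) ` Astar"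
    by (simp add: image_image)
  then have "\<Gamma>0 ` Astar = UNIV"
    using surj by simp
  then show "bounded_on Astar \<Gamma>0 \<and> \<Gamma>0 ` Astar = UNIV"
    using bounded_on_Gamma0_if_boundary_map_surj[OF surj] by blast
qed (use boundary_map_surj_if_bounded_on_Gamma0 in blast)

end

lemma unitary_boundary_triple_rotate:
  assumes "unitary_boundary_triple A Astar \<Gamma>0 \<Gamma>1"
  shows "unitary_boundary_triple A Astar \<Gamma>1 (\<lambda>fh. - \<Gamma>0 fh)"
  unfolding unitary_boundary_triple_def
proof (intro conjI ballI allI impI)
  show "clinear_on Astar (\<lambda>fh. - \<Gamma>0 fh)"
    using ubt_linear(1)[OF assms] by (rule clinear_on_uminus)
  show "green fh gh = cinner (- \<Gamma>0 fh) (\<Gamma>1 gh) - cinner (\<Gamma>1 fh) (- \<Gamma>0 gh)"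
    if "fh \<in> Astar" "gh \<in> Astar" for fh gh
    using ubt_green[OF assms that] by simp
  fix gh k0 k1
  assume "\<forall>fh\<in>Astar. green fh gh = cinner (- \<Gamma>0 fh) k0 - cinner (\<Gamma>1 fh) k1"
  then have "green fh gh = cinner (\<Gamma>1 fh) (- k1) - cinner (\<Gamma>0 fh) k0" if "fh \<in> Astar" for fh
    using that by simp
  note boundary = ubt_maximal[OF assms this]
  show "gh \<in> Astar" "\<Gamma>1 gh = k0" "- \<Gamma>0 gh = k1"
    using boundary by simp_all
qed (use ubt_closed_symmetric[OF assms] ubt_subspace[OF assms] ubt_dom_subset[OF assms]
       ubt_closure[OF assms] ubt_linear(2)[OF assms] in auto)

lemma ordinary_boundary_triple_iff_boundary_map_surj:
  assumes "unitary_boundary_triple A Astar \<Gamma>0 \<Gamma>1"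
  shows "ordinary_boundary_triple A Astar \<Gamma>0 \<Gamma>1 \<longleftrightarrow> (\<lambda>fh. (\<Gamma>0 fh, \<Gamma>1 fh)) ` Astar = UNIV"
proof
  assume surj: "(\<lambda>fh. (\<Gamma>0 fh, \<Gamma>1 fh)) ` Astar = UNIV"
  have "bounded_on Astar \<Gamma>0"
    using bounded_on_Gamma0_if_boundary_map_surj[OF assms surj] .
  moreover have "bounded_on Astar \<Gamma>1"
    using bounded_on_Gamma0_if_boundary_map_surj[OF unitary_boundary_triple_rotate[OF assms]]
      surj boundary_map_rotate_surj_iff by blast
  ultimately have "Astar = adjoint_rel A"
    by (rule adjoint_rel_eq_if_bounded_on[OF assms])
  then show "ordinary_boundary_triple A Astar \<Gamma>0 \<Gamma>1"
    unfolding ordinary_boundary_triple_def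
    using surj ubt_closed_symmetric[OF assms] ubt_linear[OF assms] ubt_green[OF assms] by blast
qed (unfold ordinary_boundary_triple_def, blast)

theorem mainTheorem15:
  fixes A Astar :: "('h::complex_hilbert \<times> 'h) set"
    and \<Gamma>0 \<Gamma>1 :: "'h \<times> 'h \<Rightarrow> 'k::complex_hilbert"
  assumes "unitary_boundary_triple A Astar \<Gamma>0 \<Gamma>1"
  shows "((bounded_on Astar \<Gamma>0 \<and> \<Gamma>0 ` Astar = UNIV)
            \<longleftrightarrow> (bounded_on Astar \<Gamma>1 \<and> \<Gamma>1 ` Astar = UNIV))
       \<and> ((bounded_on Astar \<Gamma>1 \<and> \<Gamma>1 ` Astar = UNIV)
            \<longleftrightarrow> ordinary_boundary_triple A Astar \<Gamma>0 \<Gamma>1)"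
proof -
  have "bounded_on Astar \<Gamma>1 \<and> \<Gamma>1 ` Astar = UNIV \<longleftrightarrow> (\<lambda>fh. (\<Gamma>0 fh, \<Gamma>1 fh)) ` Astar = UNIV"
    using bounded_on_surj_Gamma0_iff_boundary_map_surj[OF unitary_boundary_triple_rotate[OF assms]]
    by (simp only: boundary_map_rotate_surj_iff)
  then show ?thesis
    using bounded_on_surj_Gamma0_iff_boundary_map_surj[OF assms]
      ordinary_boundary_triple_iff_boundary_map_surj[OF assms] by blast
qed

end
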